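(* Let $P_n=\mathcal{N}(0,1)^{\otimes n}$, $Q_n=\mathcal{N}(\mu,1)^{\otimes n}$ with $\mu\in\mathbb{R}$, $M_n=\frac1n\sum_{i=1}^nX_i$, and $B=(-\infty,-b]\cup[1,\infty)$ with $b>1$. For $\mu=1$, $$I_Q^B(w)=\begin{cases}\tfrac12(w-\tfrac12)^2,& w\ge\tfrac12\ \text{or}\ w\le-b-\tfrac12,\\ +\infty,&\text{otherwise},\end{cases}$$ and $-2\in\partial I_Q^B(1/2)$ if and only if $b\ge3$. Moreover, $(Q_n)$ is asymptotically efficient for estimating $P_n(M_n\in B)$ if and only if $\mu=1$ and $b\ge3$.
   Context: $\mathbf{X}_n=(X_1,\dots,X_n)$; $\mathcal{N}(\mu,1)^{\otimes n}$ is the law of $n$ i.i.d. Gaussian variables with mean $\mu$ and variance $1$. $L_n=dP_n/dQ_n$, $W_n=-\frac1n\log L_n$. $J_Q$ is the rate function of the LDP of $(M_n,W_n)$ under $Q_n$, and $I_Q^B(w)=\inf_{m\in\bar B}J_Q(m,w)$. For $f:\mathbb{R}\to[0,\infty]$, $\partial f(x)=\{k\in\mathbb{R}: f(y)\ge f(x)+k(y-x)\ \forall y\}$. $(Q_n)$ is asymptotically efficient if $R_Q(B):=\lim_n-\frac1n\log\mathbb{E}_Q[L_n^2\mathbf{1}_{M_n\in B}]$ exists and equals $2\lim_n-\frac1n\log P_n(M_n\in B)$. *)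

theory Defs
  imports "HOL-Probability.Probability"
begin

definition gauss :: "real \<Rightarrow> real measure" where
  "gauss mu = density lborel (\<lambda>x. ennreal (normal_density mu 1 x))"

text \<open>Q_n = N(mu,1)^{n}, a law on sample vectors X_n = (X_0,...,X_{n-1}); P_n = Qn 0 n.\<close>
definition Qn :: "real \<Rightarrow> nat \<Rightarrow> (nat \<Rightarrow> real) measure" where
  "Qn mu n = PiM {..<n} (\<lambda>_. gauss mu)"

definition Mn :: "nat \<Rightarrow> (nat \<Rightarrow> real) \<Rightarrow> real" where
  "Mn n x = (\<Sum>i<n. x i) / real n"

definition Ln :: "real \<Rightarrow> nat \<Rightarrow> (nat \<Rightarrow> real) \<Rightarrow> ennreal" where
  "Ln mu n = RN_deriv (Qn mu n) (Qn 0 n)"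

definition Wn :: "real \<Rightarrow> nat \<Rightarrow> (nat \<Rightarrow> real) \<Rightarrow> real" where
  "Wn mu n x = - (1 / real n) * ln (enn2real (Ln mu n x))"

definition pair_law :: "real \<Rightarrow> nat \<Rightarrow> (real \<times> real) measure" where
  "pair_law mu n = distr (Qn mu n) borel (\<lambda>x. (Mn n x, Wn mu n x))"

definition elog :: "real \<Rightarrow> ereal" where
  "elog p = (if p \<le> 0 then - \<infinity> else ereal (ln p))"

definition is_LDP_rate :: "(nat \<Rightarrow> 'a::topological_space measure) \<Rightarrow> ('a \<Rightarrow> ereal) \<Rightarrow> bool" where
  "is_LDP_rate nu I \<longleftrightarrow>
     (\<forall>x. 0 \<le> I x) \<and>
     (\<forall>c. closed {x. I x \<le> c}) \<and>
     (\<forall>F. closed F \<longrightarrow>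
        limsup (\<lambda>n. ereal (1 / real n) * elog (measure (nu n) F)) \<le> - (INF x\<in>F. I x)) \<and>
     (\<forall>G. open G \<longrightarrow>
        - (INF x\<in>G. I x) \<le> liminf (\<lambda>n. ereal (1 / real n) * elog (measure (nu n) G)))"

definition J_Q :: "real \<Rightarrow> real \<times> real \<Rightarrow> ereal" where
  "J_Q mu = (THE I. is_LDP_rate (pair_law mu) I)"

definition I_QB :: "real \<Rightarrow> real set \<Rightarrow> real \<Rightarrow> ereal" where
  "I_QB mu B w = (INF m\<in>closure B. J_Q mu (m, w))"

definition subdiff :: "(real \<Rightarrow> ereal) \<Rightarrow> real \<Rightarrow> real set" where
  "subdiff f x = {k. \<forall>y. f x + ereal (k * (y - x)) \<le> f y}"

definition asympt_efficient :: "real \<Rightarrow> real set \<Rightarrow> bool" where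
  "asympt_efficient mu B \<longleftrightarrow>
     (\<exists>r::real.
        (\<lambda>n. - ln (enn2real (\<integral>\<^sup>+ x. (Ln mu n x)\<^sup>2 * indicator {x \<in> space (Qn mu n). Mn n x \<in> B} x \<partial>(Qn mu n))) / real n)
          \<longlonglongrightarrow> r \<and>
        (\<lambda>n. - ln (measure (Qn 0 n) {x \<in> space (Qn 0 n). Mn n x \<in> B}) / real n) \<longlonglongrightarrow> r / 2)"

end

theory Submission
  imports Defs
begin

text \<open>Under \<open>Q\<^sub>n\<close> the log-likelihood ratio is a function of the sample mean,
  \<open>W\<^sub>n = \<mu> M\<^sub>n - \<mu>\<^sup>2/2\<close>, and \<open>M\<^sub>n \<sim> N(\<mu>, 1/n)\<close>. Hence \<open>(M\<^sub>n, W\<^sub>n)\<close> is the image of a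
  Gaussian under the graph map of \<open>m \<mapsto> \<mu> m - \<mu>\<^sup>2/2\<close>, and elementary Gaussian tail bounds give
  its large deviation principle with rate \<open>(m - \<mu>)\<^sup>2/2\<close> on that graph; since rate functions are
  unique, this is \<open>J\<^sub>Q\<close>, and \<open>I\<^sub>Q\<^sup>B\<close> follows by minimising over the section. For efficiency,
  a change of measure gives \<open>E\<^sub>Q[L\<^sub>n\<^sup>2 1{M\<^sub>n \<in> B}] = e\<^bsup>n\<mu>\<^sup>2\<^esup> P(N(-\<mu>, 1/n) \<in> B)\<close>, so both
  exponents are Gaussian rates \<open>inf\<^sub>B (x + \<mu>)\<^sup>2/2 - \<mu>\<^sup>2\<close> and \<open>inf\<^sub>B x\<^sup>2/2 = 1/2\<close>, and
  efficiency reduces to \<open>inf\<^sub>B (x + \<mu>)\<^sup>2/2 = 1 + \<mu>\<^sup>2\<close>, which forces \<open>\<mu> = 1\<close> (test \<open>x = 1\<close>)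
  and then \<open>b \<ge> 3\<close> (test \<open>x = -b\<close>).\<close>

section \<open>Likelihood ratio of Gaussian samples\<close>

lemma prob_space_gauss [simp]: "prob_space (gauss mu)"
  unfolding gauss_def by (rule prob_space_normal_density) simp

lemma sets_gauss [simp, measurable_cong]: "sets (gauss mu) = sets borel"
  unfolding gauss_def by simp

lemma gauss_0_eq_density:
  "gauss 0 = density (gauss mu) (\<lambda>x. ennreal (exp (- mu * x + mu\<^sup>2 / 2)))"
proof -
  have "normal_density mu 1 x * exp (- mu * x + mu\<^sup>2 / 2) = normal_density 0 1 x" for x :: real
    unfolding normal_density_def
    by (simp add: mult.assoc exp_add[symmetric]) (simp add: power2_eq_square field_simps)
  then have "density (gauss mu) (\<lambda>x. ennreal (exp (- mu * x + mu\<^sup>2 / 2)))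
      = density lborel (\<lambda>x. ennreal (normal_density 0 1 x))"
    unfolding gauss_def
    by (subst density_density_eq) (auto intro!: density_cong simp: ennreal_mult'[symmetric])
  then show ?thesis unfolding gauss_def by simp
qed

lemma indicator_PiE_eq_prod:
  assumes "finite I" "x \<in> extensional I"
  shows "(indicator (Pi\<^sub>E I A) x :: ennreal) = (\<Prod>i\<in>I. indicator (A i) (x i))"
proof (cases "x \<in> Pi\<^sub>E I A")
  case False
  with assms obtain i where "i \<in> I" "x i \<notin> A i" by (auto simp: PiE_def Pi_iff)
  then have "(\<Prod>i\<in>I. indicator (A i) (x i) :: ennreal) = 0"
    using assms(1) by (intro prod_zero bexI[of _ i]) auto
  with False show ?thesis by simp
qed (auto simp: PiE_def Pi_iff intro!: prod.neutral)

lemma Qn_0_eq_prod_density: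
  "Qn 0 n = density (Qn mu n) (\<lambda>x. \<Prod>i<n. ennreal (exp (- mu * x i + mu\<^sup>2 / 2)))"
proof -
  interpret product_sigma_finite "\<lambda>_. gauss 0"
    unfolding product_sigma_finite_def
    using prob_space_imp_sigma_finite prob_space_gauss by blast
  interpret MU: product_sigma_finite "\<lambda>_. gauss mu"
    unfolding product_sigma_finite_def
    using prob_space_imp_sigma_finite prob_space_gauss by blast
  let ?g = "\<lambda>y::real. ennreal (exp (- mu * y + mu\<^sup>2 / 2))"
  show ?thesis
    unfolding Qn_def
  proof (rule PiM_eqI[symmetric])
    show "finite {..<n}" by simp
    show "sets (density (PiM {..<n} (\<lambda>_. gauss mu)) (\<lambda>x. \<Prod>i<n. ?g (x i))) = sets (PiM {..<n} (\<lambda>_. gauss 0))"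
      unfolding sets_density by (intro sets_PiM_cong) simp_all
  next
    fix A :: "nat \<Rightarrow> real set"
    assume A: "\<And>i. i \<in> {..<n} \<Longrightarrow> A i \<in> sets (gauss 0)"
    have mA: "Pi\<^sub>E {..<n} A \<in> sets (PiM {..<n} (\<lambda>_. gauss mu))"
      using A by (intro sets_PiM_I_finite) auto
    have "emeasure (density (PiM {..<n} (\<lambda>_. gauss mu)) (\<lambda>x. \<Prod>i<n. ?g (x i))) (Pi\<^sub>E {..<n} A)
       = (\<integral>\<^sup>+ x. (\<Prod>i<n. ?g (x i)) * indicator (Pi\<^sub>E {..<n} A) x \<partial>PiM {..<n} (\<lambda>_. gauss mu))"
      using mA by (subst emeasure_density) auto
    also have "\<dots> = (\<integral>\<^sup>+ x. (\<Prod>i<n. ?g (x i) * indicator (A i) (x i)) \<partial>PiM {..<n} (\<lambda>_. gauss mu))"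
      by (rule nn_integral_cong) (simp add: indicator_PiE_eq_prod space_PiM PiE_iff prod.distrib)
    also have "\<dots> = (\<Prod>i<n. \<integral>\<^sup>+ y. ?g y * indicator (A i) y \<partial>gauss mu)"
      using A by (subst MU.product_nn_integral_prod) auto
    also have "\<dots> = (\<Prod>i<n. emeasure (gauss 0) (A i))"
    proof (rule prod.cong[OF refl])
      fix i assume "i \<in> {..<n}"
      then have "A i \<in> sets (gauss mu)" using A by simp
      then show "(\<integral>\<^sup>+ y. ?g y * indicator (A i) y \<partial>gauss mu) = emeasure (gauss 0) (A i)"
        by (subst gauss_0_eq_density[of mu]) (simp add: emeasure_density)
    qed
    finally show "emeasure (density (PiM {..<n} (\<lambda>_. gauss mu)) (\<lambda>x. \<Prod>i<n. ?g (x i))) (Pi\<^sub>E {..<n} A)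
       = (\<Prod>i\<in>{..<n}. emeasure (gauss 0) (A i))" .
  qed
qed

lemma Qn_0_eq_density:
  "Qn 0 n = density (Qn mu n) (\<lambda>x. ennreal (exp (- mu * (\<Sum>i<n. x i) + real n * mu\<^sup>2 / 2)))"
proof -
  have "(\<lambda>x. \<Prod>i<n. ennreal (exp (- mu * x i + mu\<^sup>2 / 2)))
      = (\<lambda>x. ennreal (exp (- mu * (\<Sum>i<n. x i) + real n * mu\<^sup>2 / 2)))"
  proof
    fix x :: "nat \<Rightarrow> real"
    have "(\<Prod>i<n. ennreal (exp (- mu * x i + mu\<^sup>2 / 2))) = ennreal (\<Prod>i<n. exp (- mu * x i + mu\<^sup>2 / 2))"
      by (rule prod_ennreal) simp
    also have "(\<Prod>i<n. exp (- mu * x i + mu\<^sup>2 / 2)) = exp (\<Sum>i<n. - mu * x i + mu\<^sup>2 / 2)"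
      by (simp add: exp_sum)
    also have "(\<Sum>i<n. - mu * x i + mu\<^sup>2 / 2) = - mu * (\<Sum>i<n. x i) + real n * mu\<^sup>2 / 2"
      by (simp add: sum_subtractf sum_negf sum_distrib_left[symmetric])
    finally show "(\<Prod>i<n. ennreal (exp (- mu * x i + mu\<^sup>2 / 2)))
        = ennreal (exp (- mu * (\<Sum>i<n. x i) + real n * mu\<^sup>2 / 2))" .
  qed
  then show ?thesis using Qn_0_eq_prod_density[of n mu] by simp
qed

lemma prob_space_Qn [simp]: "prob_space (Qn mu n)"
  unfolding Qn_def by (rule prob_space_PiM) simp

lemma sets_Qn: "sets (Qn mu n) = sets (PiM {..<n} (\<lambda>_. borel))"
  unfolding Qn_def by (intro sets_PiM_cong) simp_all

lemma space_Qn: "space (Qn mu n) = space (PiM {..<n} (\<lambda>_. (borel :: real measure)))"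
  using sets_Qn by (rule sets_eq_imp_space_eq)

lemma measurable_component_Qn [measurable]: "(\<lambda>x. x i) \<in> borel_measurable (Qn mu n)"
proof (cases "i < n")
  case True
  then show ?thesis
    by (subst measurable_cong_sets[OF sets_Qn refl]) (rule measurable_component_singleton; simp)
next
  case False
  then have "x \<in> space (Qn mu n) \<Longrightarrow> x i = undefined" for x
    by (auto simp: space_Qn space_PiM PiE_def extensional_def)
  then show ?thesis by (subst measurable_cong[where g = "\<lambda>_. undefined"]) simp_all
qed

lemma measurable_Mn [measurable]: "Mn n \<in> borel_measurable (Qn mu n)"
  unfolding Mn_def by measurable

text \<open>The likelihood ratio depends on the sample only through its mean: \<open>W\<^sub>n = W_of_M \<mu> M\<^sub>n\<close>.\<close>
definition W_of_M :: "real \<Rightarrow> real \<Rightarrow> real" where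
  "W_of_M mu m = mu * m - mu\<^sup>2 / 2"

lemma Ln_AE_eq:
  assumes "0 < n"
  shows "AE x in Qn mu n. Ln mu n x = ennreal (exp (- real n * W_of_M mu (Mn n x)))"
proof -
  interpret prob_space "Qn mu n" by simp
  have AE: "AE x in Qn mu n. ennreal (exp (- mu * (\<Sum>i<n. x i) + real n * mu\<^sup>2 / 2)) = Ln mu n x"
    unfolding Ln_def by (rule RN_deriv_unique[OF _ Qn_0_eq_density[symmetric]]) simp
  have "(\<Sum>i<n. x i) = real n * Mn n x" for x
    using assms by (simp add: Mn_def)
  then have eq: "- mu * (\<Sum>i<n. x i) + real n * mu\<^sup>2 / 2 = - real n * W_of_M mu (Mn n x)" for x
    by (simp add: W_of_M_def algebra_simps)
  from AE show ?thesis
    by eventually_elim (simp only: eq)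
qed

lemma Wn_AE_eq:
  assumes "0 < n"
  shows "AE x in Qn mu n. Wn mu n x = W_of_M mu (Mn n x)"
  using Ln_AE_eq[OF assms, of mu]
proof eventually_elim
  case (elim x)
  then have "Wn mu n x = - (1 / real n) * (- real n * W_of_M mu (Mn n x))"
    by (simp add: Wn_def)
  then show ?case using assms by simp
qed

section \<open>The law of the sample mean\<close>

lemma distr_component_Qn:
  assumes "i < n"
  shows "distr (Qn mu n) borel (\<lambda>x. x i) = gauss mu"
proof -
  have "distr (Qn mu n) borel (\<lambda>x. x i) = distr (Qn mu n) (gauss mu) (\<lambda>x. x i)"
    by (rule distr_cong) auto
  also have "\<dots> = gauss mu"
    unfolding Qn_def by (rule distr_PiM_component) (use assms in auto)
  finally show ?thesis .
qed

lemma indep_vars_components_Qn: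
  assumes "0 < n"
  shows "prob_space.indep_vars (Qn mu n) (\<lambda>_. borel) (\<lambda>i x. x i) {..<n}"
proof -
  interpret prob_space "Qn mu n" by simp
  have "distr (Qn mu n) (Pi\<^sub>M {..<n} (\<lambda>i. borel)) (\<lambda>x. \<lambda>i\<in>{..<n}. x i)
      = distr (Qn mu n) (Qn mu n) (\<lambda>x. x)"
  proof (rule distr_cong[OF refl])
    show "sets (Pi\<^sub>M {..<n} (\<lambda>i. borel)) = sets (Qn mu n)" by (simp add: sets_Qn)
    fix x assume "x \<in> space (Qn mu n)"
    then have "x \<in> extensional {..<n}" by (simp add: space_Qn space_PiM PiE_def)
    then show "(\<lambda>i\<in>{..<n}. x i) = x" by (rule extensional_restrict)
  qed
  also have "\<dots> = Pi\<^sub>M {..<n} (\<lambda>_. gauss mu)"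
    unfolding distr_id by (rule Qn_def)
  also have "\<dots> = Pi\<^sub>M {..<n} (\<lambda>i. distr (Qn mu n) borel (\<lambda>x. x i))"
    by (rule PiM_cong) (simp_all add: distr_component_Qn)
  finally show ?thesis
    using assms by (subst indep_vars_iff_distr_eq_PiM) auto
qed

definition normal_measure :: "real \<Rightarrow> real \<Rightarrow> real measure" where
  "normal_measure c s = density lborel (\<lambda>x. ennreal (normal_density c s x))"

abbreviation mean_law :: "real \<Rightarrow> nat \<Rightarrow> real measure" where
  "mean_law c n \<equiv> normal_measure c (1 / sqrt (real n))"

lemma prob_space_normal_measure: "0 < s \<Longrightarrow> prob_space (normal_measure c s)"
  unfolding normal_measure_def by (rule prob_space_normal_density) simp

lemma sets_normal_measure [simp, measurable_cong]: "sets (normal_measure c s) = sets borel"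
  unfolding normal_measure_def by simp

lemma distr_Mn:
  assumes "0 < n"
  shows "distr (Qn mu n) borel (Mn n) = mean_law mu n"
proof -
  interpret prob_space "Qn mu n" by simp
  have "distributed (Qn mu n) lborel (\<lambda>x. x i) (normal_density mu 1)" if "i < n" for i
  proof -
    have "distr (Qn mu n) lborel (\<lambda>x. x i) = distr (Qn mu n) borel (\<lambda>x. x i)"
      by (rule distr_cong) auto
    then show ?thesis
      using distr_component_Qn[OF that] unfolding distributed_def by (auto simp: gauss_def)
  qed
  then have "distributed (Qn mu n) lborel (\<lambda>x. \<Sum>i<n. x i) (normal_density (real n * mu) (sqrt (real n)))"
    using sum_indep_normal[OF _ _ indep_vars_components_Qn[OF assms], of "\<lambda>_. 1" "\<lambda>_. mu"] assms
    by (simp add: lessThan_empty_iff)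
  from normal_density_affine[OF this, of "1 / real n" 0]
  have "distributed (Qn mu n) lborel (\<lambda>x. (\<Sum>i<n. x i) / real n) (normal_density mu (sqrt (real n) / real n))"
    using assms by simp
  moreover have "sqrt (real n) / real n = 1 / sqrt (real n)"
    using assms by (simp add: field_simps)
  ultimately have "distributed (Qn mu n) lborel (Mn n) (normal_density mu (1 / sqrt (real n)))"
    by (simp add: Mn_def[abs_def])
  then have "distr (Qn mu n) lborel (Mn n) = mean_law mu n"
    unfolding distributed_def normal_measure_def by simp
  then show ?thesis by (simp cong: distr_cong)
qed

lemma measure_Mn:
  assumes "0 < n" "B \<in> sets borel"
  shows "measure (Qn mu n) {x \<in> space (Qn mu n). Mn n x \<in> B} = measure (mean_law mu n) B"
proof -
  have "measure (mean_law mu n) B = measure (Qn mu n) (Mn n -` B \<inter> space (Qn mu n))"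
    unfolding distr_Mn[OF assms(1), symmetric] by (rule measure_distr) (simp_all add: assms(2))
  then show ?thesis by (simp add: vimage_def Int_def conj_commute)
qed

section \<open>Gaussian tail estimates\<close>

lemma ereal_mult_elog: "0 < p \<Longrightarrow> ereal (1 / real n) * elog p = ereal (ln p / real n)"
  by (simp add: elog_def)

lemma nn_integral_normal_density: "0 < s \<Longrightarrow> (\<integral>\<^sup>+x. ennreal (normal_density c s x) \<partial>lborel) = 1"
  by (subst nn_integral_eq_integral) auto

text \<open>Completing the square: on the side of \<open>c\<close> where \<open>x\<close> lies,
  \<open>(x - c)\<^sup>2 \<ge> d\<^sup>2 + (x - (c \<plusminus> d))\<^sup>2\<close>.\<close>
lemma normal_density_le_shifted:
  assumes s: "0 < s" and d: "0 \<le> d" and xd: "d \<le> \<bar>x - c\<bar>"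
  shows "normal_density c s x
    \<le> exp (- d\<^sup>2 / (2 * s\<^sup>2)) * (normal_density (c + d) s x + normal_density (c - d) s x)"
proof -
  obtain e where e: "e = c + d \<and> d \<le> x - c \<or> e = c - d \<and> d \<le> c - x"
    using xd by (cases "c \<le> x") auto
  have "d\<^sup>2 + (x - e)\<^sup>2 \<le> (x - c)\<^sup>2"
    using e mult_nonneg_nonneg[OF d, of "x - c - d"] mult_nonneg_nonneg[OF d, of "c - x - d"]
    by (auto simp: power2_eq_square algebra_simps)
  then have "- (x - c)\<^sup>2 / (2 * s\<^sup>2) \<le> - d\<^sup>2 / (2 * s\<^sup>2) + - (x - e)\<^sup>2 / (2 * s\<^sup>2)"
    using s by (simp add: divide_simps)
  then have "exp (- (x - c)\<^sup>2 / (2 * s\<^sup>2)) \<le> exp (- d\<^sup>2 / (2 * s\<^sup>2)) * exp (- (x - e)\<^sup>2 / (2 * s\<^sup>2))"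
    by (simp add: exp_add[symmetric])
  then have "normal_density c s x \<le> exp (- d\<^sup>2 / (2 * s\<^sup>2)) * normal_density e s x"
    unfolding normal_density_def by (subst mult.left_commute) (intro mult_left_mono; simp)
  also have "\<dots> \<le> exp (- d\<^sup>2 / (2 * s\<^sup>2)) * (normal_density (c + d) s x + normal_density (c - d) s x)"
    using e by (intro mult_left_mono) auto
  finally show ?thesis .
qed

lemma measure_normal_measure_le:
  assumes s: "0 < s" and d: "0 \<le> d" and A: "A \<in> sets borel" and Ad: "\<forall>x\<in>A. d \<le> \<bar>x - c\<bar>"
  shows "measure (normal_measure c s) A \<le> 2 * exp (- d\<^sup>2 / (2 * s\<^sup>2))"
proof -
  interpret prob_space "normal_measure c s" using prob_space_normal_measure[OF s] .
  let ?E = "exp (- d\<^sup>2 / (2 * s\<^sup>2))"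
  have "emeasure (normal_measure c s) A = (\<integral>\<^sup>+x. ennreal (normal_density c s x) * indicator A x \<partial>lborel)"
    unfolding normal_measure_def using A by (subst emeasure_density) auto
  also have "\<dots> \<le> (\<integral>\<^sup>+x. ennreal ?E * (ennreal (normal_density (c + d) s x) + ennreal (normal_density (c - d) s x)) \<partial>lborel)"
  proof (rule nn_integral_mono)
    fix x
    show "ennreal (normal_density c s x) * indicator A x \<le> ennreal ?E * (ennreal (normal_density (c + d) s x) + ennreal (normal_density (c - d) s x))"
    proof (cases "x \<in> A")
      case True
      then have "normal_density c s x \<le> ?E * (normal_density (c + d) s x + normal_density (c - d) s x)"
        using normal_density_le_shifted[OF s d] Ad by auto
      then show ?thesis using True
        by (simp add: ennreal_mult'[symmetric] ennreal_plus[symmetric] del: ennreal_plus)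
    qed simp
  qed
  also have "\<dots> = ennreal ?E * ((\<integral>\<^sup>+x. ennreal (normal_density (c + d) s x) \<partial>lborel) + (\<integral>\<^sup>+x. ennreal (normal_density (c - d) s x) \<partial>lborel))"
    by (subst nn_integral_cmult) (auto simp: nn_integral_add)
  also have "\<dots> = ennreal (2 * ?E)"
    using s by (simp add: nn_integral_normal_density ennreal_mult' mult.commute)
  finally have "ennreal (measure (normal_measure c s) A) \<le> ennreal (2 * ?E)"
    by (simp add: emeasure_eq_measure)
  then show ?thesis by (simp add: ennreal_le_iff)
qed

lemma measure_normal_measure_ge:
  assumes s: "0 < s" and e: "0 < e" and A: "A \<in> sets borel"
    and I: "{a..a+e} \<subseteq> A \<or> {a-e..a} \<subseteq> A"
  shows "e * (1 / sqrt (2 * pi * s\<^sup>2)) * exp (- (\<bar>a - c\<bar> + e)\<^sup>2 / (2 * s\<^sup>2)) \<le> measure (normal_measure c s) A"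
proof -
  interpret prob_space "normal_measure c s" using prob_space_normal_measure[OF s] .
  obtain l where l: "{l..l+e} \<subseteq> A" "l = a \<or> l = a - e"
    using I by (metis diff_add_cancel)
  let ?K = "1 / sqrt (2 * pi * s\<^sup>2) * exp (- (\<bar>a - c\<bar> + e)\<^sup>2 / (2 * s\<^sup>2))"
  have pt: "?K \<le> normal_density c s x" if x: "x \<in> {l..l+e}" for x
  proof -
    have "\<bar>x - c\<bar> \<le> \<bar>a - c\<bar> + e" using x l by auto
    then have "(x - c)\<^sup>2 \<le> (\<bar>a - c\<bar> + e)\<^sup>2"
      by (metis abs_ge_zero abs_le_square_iff abs_of_nonneg e add_nonneg_nonneg less_imp_le)
    then have "- (\<bar>a - c\<bar> + e)\<^sup>2 / (2 * s\<^sup>2) \<le> - (x - c)\<^sup>2 / (2 * s\<^sup>2)"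
      using s by (simp add: divide_simps)
    then show ?thesis unfolding normal_density_def by (intro mult_left_mono) auto
  qed
  have "ennreal (?K * e) = ennreal ?K * ennreal e"
    by (rule ennreal_mult') simp
  also have "\<dots> = (\<integral>\<^sup>+x. ennreal ?K * indicator {l..l+e} x \<partial>lborel)"
    using e by (simp add: nn_integral_cmult_indicator)
  also have "\<dots> \<le> (\<integral>\<^sup>+x. ennreal (normal_density c s x) * indicator A x \<partial>lborel)"
  proof (rule nn_integral_mono)
    fix x show "ennreal ?K * indicator {l..l+e} x \<le> ennreal (normal_density c s x) * indicator A x"
      using pt[of x] l(1) by (auto simp: indicator_def)
  qed
  also have "\<dots> = emeasure (normal_measure c s) A"
    unfolding normal_measure_def using A by (subst emeasure_density) auto
  finally have "ennreal (?K * e) \<le> ennreal (measure (normal_measure c s) A)"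
    by (simp add: emeasure_eq_measure)
  then show ?thesis by (simp add: ennreal_le_iff mult.commute mult.left_commute)
qed

lemma mean_law_variance:
  assumes "0 < n"
  shows "0 < 1 / sqrt (real n)" "(1 / sqrt (real n))\<^sup>2 = 1 / real n"
  using assms by (auto simp: power_divide)

lemma elog_measure_mean_law_le:
  assumes n: "0 < n" and A: "A \<in> sets borel" and D: "0 \<le> D" and AD: "\<forall>x\<in>A. D \<le> (x - c)\<^sup>2 / 2"
  shows "elog (measure (mean_law c n) A) \<le> ereal (ln 2 - real n * D)"
proof -
  have "\<forall>x\<in>A. sqrt (2 * D) \<le> \<bar>x - c\<bar>"
    using AD real_sqrt_le_mono[of "2 * D" "(_ - c)\<^sup>2"] by auto
  from measure_normal_measure_le[OF mean_law_variance(1)[OF n] _ A this]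
  have P: "measure (mean_law c n) A \<le> 2 * exp (- real n * D)"
    using D n by (simp add: mean_law_variance(2) mult.commute)
  show ?thesis
  proof (cases "measure (mean_law c n) A \<le> 0")
    case False
    then have "ln (measure (mean_law c n) A) \<le> ln (2 * exp (- real n * D))"
      using P by (intro ln_mono) auto
    then show ?thesis using False by (simp add: elog_def ln_mult)
  qed (simp add: elog_def)
qed

lemma ln_measure_mean_law_ge:
  assumes n: "0 < n" and e: "0 < e" and A: "A \<in> sets borel"
    and I: "{a..a+e} \<subseteq> A \<or> {a-e..a} \<subseteq> A"
  shows "0 < measure (mean_law c n) A"
    and "ln (e / sqrt (2 * pi)) - real n * (\<bar>a - c\<bar> + e)\<^sup>2 / 2 \<le> ln (measure (mean_law c n) A)"
proof -
  let ?L = "e / sqrt (2 * pi) * exp (- real n * (\<bar>a - c\<bar> + e)\<^sup>2 / 2)"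
  have k: "e / sqrt (2 * pi) \<le> e * (1 / sqrt (2 * pi * (1 / sqrt (real n))\<^sup>2))"
    using n e by (simp add: mean_law_variance(2) real_sqrt_divide divide_right_mono)
  have x: "- (\<bar>a - c\<bar> + e)\<^sup>2 / (2 * (1 / sqrt (real n))\<^sup>2) = - real n * (\<bar>a - c\<bar> + e)\<^sup>2 / 2"
    using n by (simp add: mean_law_variance(2))
  have "?L \<le> e * (1 / sqrt (2 * pi * (1 / sqrt (real n))\<^sup>2))
      * exp (- (\<bar>a - c\<bar> + e)\<^sup>2 / (2 * (1 / sqrt (real n))\<^sup>2))"
    unfolding x by (rule mult_right_mono[OF k]) simp
  also have "\<dots> \<le> measure (mean_law c n) A"
    by (rule measure_normal_measure_ge[OF mean_law_variance(1)[OF n] e A I])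
  finally have L: "?L \<le> measure (mean_law c n) A" .
  moreover have pos: "0 < ?L" using e by simp
  ultimately show "0 < measure (mean_law c n) A" by linarith
  have "ln ?L = ln (e / sqrt (2 * pi)) - real n * (\<bar>a - c\<bar> + e)\<^sup>2 / 2"
    using e by (subst ln_mult) auto
  moreover have "ln ?L \<le> ln (measure (mean_law c n) A)"
    using L pos by (intro ln_mono) auto
  ultimately show "ln (e / sqrt (2 * pi)) - real n * (\<bar>a - c\<bar> + e)\<^sup>2 / 2 \<le> ln (measure (mean_law c n) A)"
    by simp
qed

lemma eventually_elog_measure_mean_law_le:
  assumes A: "A \<in> sets borel" and AD: "\<forall>x\<in>A. D \<le> (x - c)\<^sup>2 / 2" and del: "0 < del"
  shows "\<forall>\<^sub>F n in sequentially. ereal (1 / real n) * elog (measure (mean_law c n) A) \<le> ereal (del - D)"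
proof -
  have AD': "\<forall>x\<in>A. max D 0 \<le> (x - c)\<^sup>2 / 2" using AD by (auto simp: max_def)
  have "\<forall>\<^sub>F n in sequentially. ln 2 / real n < del"
    using lim_const_over_n[of "ln 2"] del by (rule order_tendstoD)
  then show ?thesis using eventually_gt_at_top[of 0]
  proof eventually_elim
    case (elim n)
    have "ereal (1 / real n) * elog (measure (mean_law c n) A) \<le> ereal (1 / real n) * ereal (ln 2 - real n * max D 0)"
      using elim by (intro ereal_mult_left_mono elog_measure_mean_law_le[OF _ A _ AD']) auto
    also have "\<dots> = ereal (ln 2 / real n - max D 0)"
      using elim by (simp add: field_simps)
    also have "\<dots> \<le> ereal (del - D)"
      using elim by simp
    finally show ?case .
  qed
qed

lemma eventually_ln_measure_mean_law_ge:
  assumes A: "A \<in> sets borel" and e: "0 < e" and I: "{a..a+e} \<subseteq> A \<or> {a-e..a} \<subseteq> A"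
    and del: "0 < del"
  shows "\<forall>\<^sub>F n in sequentially. 0 < measure (mean_law c n) A
    \<and> - ((a - c)\<^sup>2 / 2) - del \<le> ln (measure (mean_law c n) A) / real n"
proof -
  define r where "r = \<bar>a - c\<bar>"
  text \<open>Shrink the interval so that the quadratic error \<open>(r + e')\<^sup>2 - r\<^sup>2\<close> stays below \<open>del\<close>.\<close>
  define e' where "e' = min e (min 1 (del / (2 * r + 1)))"
  have r: "0 \<le> r" by (simp add: r_def)
  have "e' \<le> del / (2 * r + 1)" by (simp add: e'_def)
  then have e': "0 < e'" "e' \<le> 1" "e' * (2 * r + 1) \<le> del"
    using e del r by (simp_all add: e'_def pos_le_divide_eq)
  have "{a..a+e'} \<subseteq> {a..a+e}" "{a-e'..a} \<subseteq> {a-e..a}"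
    by (auto simp: e'_def)
  with I have I': "{a..a+e'} \<subseteq> A \<or> {a-e'..a} \<subseteq> A"
    by blast
  have "e' * e' \<le> e'" using e' by (intro mult_left_le) auto
  then have sq: "(r + e')\<^sup>2 \<le> r\<^sup>2 + del"
    using e'(3) by (simp add: power2_eq_square algebra_simps)
  define C where "C = ln (e' / sqrt (2 * pi))"
  have "\<forall>\<^sub>F n in sequentially. - (del / 2) < C / real n"
    using lim_const_over_n[of C] del by (intro order_tendstoD) auto
  then show ?thesis using eventually_gt_at_top[of 0]
  proof eventually_elim
    case (elim n)
    note bounds = ln_measure_mean_law_ge[OF elim(2) e'(1) A I', of c, folded C_def r_def]
    have "(C - real n * (r + e')\<^sup>2 / 2) / real n \<le> ln (measure (mean_law c n) A) / real n"
      using bounds(2) elim by (simp add: divide_right_mono)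
    then have "C / real n - (r + e')\<^sup>2 / 2 \<le> ln (measure (mean_law c n) A) / real n"
      using elim by (simp add: field_simps)
    then show ?case using bounds(1) elim sq by (simp add: r_def)
  qed
qed

lemma tendsto_ln_measure_mean_law:
  assumes A: "A \<in> sets borel" "A \<noteq> {}"
    and I: "\<And>a. a \<in> A \<Longrightarrow> \<exists>e>0. {a..a+e} \<subseteq> A \<or> {a-e..a} \<subseteq> A"
  shows "(\<lambda>n. - ln (measure (mean_law c n) A) / real n) \<longlonglongrightarrow> (INF x\<in>A. (x - c)\<^sup>2 / 2)"
proof -
  define R where "R = (INF x\<in>A. (x - c)\<^sup>2 / 2)"
  have bdd: "bdd_below ((\<lambda>x. (x - c)\<^sup>2 / 2) ` A)"
    by (rule bdd_belowI[of _ 0]) auto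
  obtain a e where "a \<in> A" "0 < e" "{a..a+e} \<subseteq> A \<or> {a-e..a} \<subseteq> A"
    using A(2) I by blast
  then have pos: "\<forall>\<^sub>F n in sequentially. 0 < measure (mean_law c n) A"
    using eventually_ln_measure_mean_law_ge[OF A(1), of e a 1 c] by (auto elim: eventually_mono)
  have "(\<lambda>n. - ln (measure (mean_law c n) A) / real n) \<longlonglongrightarrow> R"
  proof (rule order_tendstoI)
    fix y assume "y < R"
    have "\<forall>x\<in>A. R \<le> (x - c)\<^sup>2 / 2" unfolding R_def using cINF_lower[OF bdd] by blast
    moreover have "0 < (R - y) / 2" using \<open>y < R\<close> by simp
    ultimately have "\<forall>\<^sub>F n in sequentially.
        ereal (1 / real n) * elog (measure (mean_law c n) A) \<le> ereal ((R - y) / 2 - R)"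
      by (rule eventually_elog_measure_mean_law_le[OF A(1)])
    with pos show "\<forall>\<^sub>F n in sequentially. y < - ln (measure (mean_law c n) A) / real n"
    proof eventually_elim
      case (elim n)
      then have "ln (measure (mean_law c n) A) / real n \<le> (R - y) / 2 - R"
        by (simp add: ereal_mult_elog)
      then show ?case using \<open>y < R\<close> by (simp add: field_simps)
    qed
  next
    fix y assume "R < y"
    then obtain a where a: "a \<in> A" "(a - c)\<^sup>2 / 2 < y"
      using cINF_less_iff[OF A(2) bdd] unfolding R_def by blast
    with I obtain e where e: "0 < e" "{a..a+e} \<subseteq> A \<or> {a-e..a} \<subseteq> A" by blast
    define del where "del = (y - (a - c)\<^sup>2 / 2) / 2"
    have "(a - c)\<^sup>2 / 2 + del < y" using a(2) by (simp add: del_def field_simps)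
    have "0 < del" using a(2) by (simp add: del_def)
    from eventually_ln_measure_mean_law_ge[OF A(1) e this, of c]
    show "\<forall>\<^sub>F n in sequentially. - ln (measure (mean_law c n) A) / real n < y"
    proof eventually_elim
      case (elim n)
      then have "- (ln (measure (mean_law c n) A) / real n) \<le> (a - c)\<^sup>2 / 2 + del"
        by linarith
      then have "- (ln (measure (mean_law c n) A) / real n) < y"
        using \<open>(a - c)\<^sup>2 / 2 + del < y\<close> by linarith
      then show ?case by (simp only: minus_divide_left)
    qed
  qed
  then show ?thesis unfolding R_def .
qed

section \<open>The large deviation principle for \<open>(M\<^sub>n, W\<^sub>n)\<close>\<close>

lemma measurable_W_of_M_graph [measurable]: "(\<lambda>m. (m, W_of_M mu m)) \<in> borel_measurable borel"
  unfolding W_of_M_def by measurable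

lemma measurable_Wn [measurable]: "Wn mu n \<in> borel_measurable (Qn mu n)"
  unfolding Wn_def Ln_def by measurable

lemma pair_law_eq_distr:
  assumes "0 < n"
  shows "pair_law mu n = distr (mean_law mu n) borel (\<lambda>m. (m, W_of_M mu m))"
proof -
  have "pair_law mu n = distr (Qn mu n) borel (\<lambda>x. (Mn n x, W_of_M mu (Mn n x)))"
    unfolding pair_law_def
    by (rule distr_cong_AE) (use Wn_AE_eq[OF assms, of mu] in \<open>auto simp: W_of_M_def\<close>)
  also have "\<dots> = distr (distr (Qn mu n) borel (Mn n)) borel (\<lambda>m. (m, W_of_M mu m))"
    by (subst distr_distr) (auto simp: comp_def)
  finally show ?thesis by (simp add: distr_Mn[OF assms])
qed

lemma measure_pair_law:
  assumes "0 < n" "F \<in> sets borel"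
  shows "measure (pair_law mu n) F = measure (mean_law mu n) {m. (m, W_of_M mu m) \<in> F}"
  unfolding pair_law_eq_distr[OF assms(1)] using assms(2)
  by (subst measure_distr) (auto simp: normal_measure_def vimage_def Int_def)

lemma prob_space_pair_law: "prob_space (pair_law mu n)"
  unfolding pair_law_def by (rule prob_space.prob_space_distr) simp_all

lemma sets_pair_law [simp]: "sets (pair_law mu n) = sets borel"
  unfolding pair_law_def by simp

definition pair_rate :: "real \<Rightarrow> real \<times> real \<Rightarrow> ereal" where
  "pair_rate mu p = (if snd p = W_of_M mu (fst p) then ereal ((fst p - mu)\<^sup>2 / 2) else \<infinity>)"

lemma pair_rate_nonneg: "0 \<le> pair_rate mu p"
  by (simp add: pair_rate_def)

lemma closed_pair_rate_sublevel: "closed {p. pair_rate mu p \<le> c}"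
proof (cases c)
  case (real r)
  then have "{p. pair_rate mu p \<le> c} = {p. snd p = W_of_M mu (fst p) \<and> (fst p - mu)\<^sup>2 / 2 \<le> r}"
    by (auto simp: pair_rate_def)
  also have "closed \<dots>"
    unfolding W_of_M_def
    by (intro closed_Collect_conj closed_Collect_eq closed_Collect_le continuous_intros) auto
  finally show ?thesis .
next
  case MInf
  then have "{p. pair_rate mu p \<le> c} = {}"
    by (auto simp: pair_rate_def split: if_splits)
  then show ?thesis by (metis closed_empty)
qed simp

lemma pair_law_ldp_upper:
  assumes "closed F"
  shows "limsup (\<lambda>n. ereal (1 / real n) * elog (measure (pair_law mu n) F))
    \<le> - (INF x\<in>F. pair_rate mu x)"
proof -
  let ?s = "\<lambda>n. ereal (1 / real n) * elog (measure (pair_law mu n) F)"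
  let ?A = "{m. (m, W_of_M mu m) \<in> F}"
  have F: "F \<in> sets borel" using assms by simp
  then have A: "?A \<in> sets borel"
    using measurable_sets[OF measurable_W_of_M_graph F] by (simp add: vimage_def)
  have s: "\<forall>\<^sub>F n in sequentially. ?s n = ereal (1 / real n) * elog (measure (mean_law mu n) ?A)"
    using eventually_gt_at_top[of 0] by eventually_elim (simp add: measure_pair_law F)
  show ?thesis
  proof (rule ereal_le_real)
    fix z assume z: "- (INF x\<in>F. pair_rate mu x) \<le> ereal z"
    have "\<forall>m\<in>?A. - z \<le> (m - mu)\<^sup>2 / 2"
    proof
      fix m assume "m \<in> ?A"
      then have "(INF x\<in>F. pair_rate mu x) \<le> pair_rate mu (m, W_of_M mu m)"
        by (auto intro: INF_lower)
      also have "\<dots> = ereal ((m - mu)\<^sup>2 / 2)"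
        by (simp add: pair_rate_def)
      finally have "(INF x\<in>F. pair_rate mu x) \<le> ereal ((m - mu)\<^sup>2 / 2)" .
      moreover have "- ereal z \<le> (INF x\<in>F. pair_rate mu x)"
        using z by (simp add: ereal_uminus_le_reorder)
      ultimately have "- ereal z \<le> ereal ((m - mu)\<^sup>2 / 2)" by (rule order_trans[rotated])
      then show "- z \<le> (m - mu)\<^sup>2 / 2" by simp
    qed
    show "limsup ?s \<le> ereal z"
    proof (rule ereal_le_epsilon2)
      fix del :: real assume "0 < del"
      from eventually_elog_measure_mean_law_le[OF A \<open>\<forall>m\<in>?A. - z \<le> _\<close> this] s
      have "\<forall>\<^sub>F n in sequentially. ?s n \<le> ereal z + ereal del"
        by eventually_elim (simp add: add.commute)
      then show "limsup ?s \<le> ereal z + ereal del" by (rule Limsup_bounded)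
    qed
  qed
qed

lemma pair_law_ldp_lower:
  assumes "open G"
  shows "- (INF x\<in>G. pair_rate mu x)
    \<le> liminf (\<lambda>n. ereal (1 / real n) * elog (measure (pair_law mu n) G))"
proof -
  let ?s = "\<lambda>n. ereal (1 / real n) * elog (measure (pair_law mu n) G)"
  let ?A = "{m. (m, W_of_M mu m) \<in> G}"
  have G: "G \<in> sets borel" using assms by simp
  have "open ?A"
    using continuous_open_vimage[OF assms, of "\<lambda>m. (m, W_of_M mu m)"]
    by (simp add: vimage_def W_of_M_def continuous_intros)
  then have A: "?A \<in> sets borel" by simp
  have "- liminf ?s \<le> pair_rate mu (a, w)" if "(a, w) \<in> G" for a w
  proof (cases "w = W_of_M mu a")
    case True
    with that \<open>open ?A\<close> obtain e where e: "0 < e" "ball a e \<subseteq> ?A"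
      by (auto elim!: openE)
    then have I: "{a..a + e/2} \<subseteq> ?A \<or> {a - e/2..a} \<subseteq> ?A"
      by (auto simp: subset_eq dist_real_def)
    have "ereal (- ((a - mu)\<^sup>2 / 2)) \<le> liminf ?s"
    proof (rule ereal_le_epsilon2)
      fix del :: real assume "0 < del"
      from eventually_ln_measure_mean_law_ge[OF A half_gt_zero[OF e(1)] I this, of mu]
        eventually_gt_at_top[of 0]
      have "\<forall>\<^sub>F n in sequentially. ereal (- ((a - mu)\<^sup>2 / 2) - del) \<le> ?s n"
        by eventually_elim (simp add: measure_pair_law G ereal_mult_elog)
      then have "ereal (- ((a - mu)\<^sup>2 / 2) - del) \<le> liminf ?s" by (rule Liminf_bounded)
      then have "ereal (- ((a - mu)\<^sup>2 / 2) - del) + ereal del \<le> liminf ?s + ereal del"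
        by (rule add_right_mono)
      then show "ereal (- ((a - mu)\<^sup>2 / 2)) \<le> liminf ?s + ereal del" by simp
    qed
    then show ?thesis using True by (simp add: pair_rate_def ereal_uminus_le_reorder)
  qed (simp add: pair_rate_def)
  then have "- liminf ?s \<le> (INF x\<in>G. pair_rate mu x)"
    by (auto intro!: INF_greatest)
  then show ?thesis by (simp add: ereal_uminus_le_reorder)
qed

lemma is_LDP_rate_pair_rate: "is_LDP_rate (pair_law mu) (pair_rate mu)"
  unfolding is_LDP_rate_def
  by (intro conjI allI impI pair_rate_nonneg closed_pair_rate_sublevel pair_law_ldp_upper
      pair_law_ldp_lower)

lemma elog_mono: "p \<le> q \<Longrightarrow> elog p \<le> elog q"
  by (auto simp: elog_def)

text \<open>Lower semicontinuity of \<open>I1\<close> makes \<open>I1 > c\<close> on a small closed ball around \<open>x\<close>; the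
  upper bound for \<open>I1\<close> on that ball and the lower bound for \<open>I2\<close> on the open ball inside it
  then force \<open>I2 x \<ge> c\<close>.\<close>
lemma LDP_rate_le:
  fixes nu :: "nat \<Rightarrow> 'a::metric_space measure"
  assumes fin: "\<And>n. finite_measure (nu n)" and sets: "\<And>n. sets (nu n) = sets borel"
    and L1: "is_LDP_rate nu I1" and L2: "is_LDP_rate nu I2"
  shows "I1 x \<le> I2 x"
proof (rule dense_le)
  fix c assume c: "c < I1 x"
  have cl: "closed {y. I1 y \<le> c}" using L1 by (simp add: is_LDP_rate_def)
  have "open (- {y. I1 y \<le> c})" using cl by (simp add: open_Compl)
  moreover have "x \<in> - {y. I1 y \<le> c}" using c by simp
  ultimately obtain e where e: "0 < e" "ball x e \<subseteq> - {y. I1 y \<le> c}"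
    using openE by blast
  let ?F = "cball x (e / 2)"
  let ?B = "ball x (e / 2)"
  let ?s = "\<lambda>S n. ereal (1 / real n) * elog (measure (nu n) S)"
  have Fsub: "?F \<subseteq> ball x e" using e by (auto simp: subset_eq)
  have cF: "c \<le> (INF y\<in>?F. I1 y)"
  proof (rule INF_greatest)
    fix y assume "y \<in> ?F"
    then have "y \<in> - {y. I1 y \<le> c}" using Fsub e(2) by blast
    then show "c \<le> I1 y" by simp
  qed
  have U: "limsup (?s ?F) \<le> - (INF y\<in>?F. I1 y)"
    using L1 by (simp add: is_LDP_rate_def)
  have Lw: "- (INF y\<in>?B. I2 y) \<le> liminf (?s ?B)"
    using L2 by (simp add: is_LDP_rate_def)
  have xB: "x \<in> ?B" using e by simp
  have "(INF y\<in>?B. I2 y) \<le> I2 x" using xB by (rule INF_lower)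
  then have "- I2 x \<le> - (INF y\<in>?B. I2 y)" by (subst ereal_minus_le_minus)
  also have "\<dots> \<le> liminf (?s ?B)" by (rule Lw)
  also have "\<dots> \<le> liminf (?s ?F)"
  proof (rule Liminf_mono, rule always_eventually, rule allI)
    fix n
    interpret finite_measure "nu n" by (rule fin)
    have "measure (nu n) ?B \<le> measure (nu n) ?F"
      by (rule finite_measure_mono) (auto simp: sets)
    then show "?s ?B n \<le> ?s ?F n"
      by (intro ereal_mult_left_mono elog_mono) simp_all
  qed
  also have "\<dots> \<le> limsup (?s ?F)" by (rule Liminf_le_Limsup) simp
  also have "\<dots> \<le> - (INF y\<in>?F. I1 y)" by (rule U)
  also have "\<dots> \<le> - c" using cF by (subst ereal_minus_le_minus)
  finally show "c \<le> I2 x" by (subst (asm) ereal_minus_le_minus)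
qed

lemma LDP_rate_unique:
  fixes nu :: "nat \<Rightarrow> 'a::metric_space measure"
  assumes "\<And>n. finite_measure (nu n)" "\<And>n. sets (nu n) = sets borel"
    and "is_LDP_rate nu I1" "is_LDP_rate nu I2"
  shows "I1 = I2"
  using assms by (intro ext antisym LDP_rate_le[OF assms(1,2)])

lemma J_Q_eq: "J_Q mu = pair_rate mu"
  unfolding J_Q_def
proof (rule the_equality)
  fix I assume "is_LDP_rate (pair_law mu) I"
  moreover have "finite_measure (pair_law mu n)" for n
    using prob_space_pair_law by (simp add: prob_space_def)
  ultimately show "I = pair_rate mu"
    using LDP_rate_unique is_LDP_rate_pair_rate by (metis sets_pair_law)
qed (rule is_LDP_rate_pair_rate)

lemma INF_if_eq_top:
  "(INF m\<in>S. if m = a then f m else (\<infinity> :: ereal)) = (if a \<in> S then f a else \<infinity>)"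
proof (cases "a \<in> S")
  case True
  then show ?thesis by (intro antisym) (auto intro!: INF_greatest INF_lower2[OF True])
qed (auto simp: top_ereal_def[symmetric] INF_top_conv)

lemma I_QB_eq:
  assumes "mu \<noteq> 0"
  shows "I_QB mu B w
    = (if w / mu + mu / 2 \<in> closure B then ereal ((w / mu - mu / 2)\<^sup>2 / 2) else \<infinity>)"
proof -
  have rate_on_section: "pair_rate mu (m, w)
      = (if m = w / mu + mu / 2 then ereal ((m - mu)\<^sup>2 / 2) else \<infinity>)" for m
    using assms by (auto simp: pair_rate_def W_of_M_def field_simps power2_eq_square)
  have "w / mu + mu / 2 - mu = w / mu - mu / 2" by simp
  then show ?thesis
    unfolding I_QB_def J_Q_eq rate_on_section INF_if_eq_top by (simp only:)
qed

section \<open>Asymptotic efficiency\<close>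

text \<open>Tilting by the squared likelihood ratio reflects the mean: this turns the second moment
  of the estimator into a Gaussian probability under \<open>N(-\<mu>, 1/n)\<close>.\<close>
lemma normal_density_exp_tilt:
  assumes "0 < s"
  shows "normal_density c s m * exp (- (2 * c * m - c\<^sup>2) / s\<^sup>2)
    = exp (c\<^sup>2 / s\<^sup>2) * normal_density (- c) s m"
proof -
  have "- (m - c)\<^sup>2 / (2 * s\<^sup>2) + - (2 * c * m - c\<^sup>2) / s\<^sup>2 = c\<^sup>2 / s\<^sup>2 + - (m - - c)\<^sup>2 / (2 * s\<^sup>2)"
    using assms by (simp add: power2_eq_square field_simps)
  then have "exp (- (m - c)\<^sup>2 / (2 * s\<^sup>2)) * exp (- (2 * c * m - c\<^sup>2) / s\<^sup>2)
      = exp (c\<^sup>2 / s\<^sup>2) * exp (- (m - - c)\<^sup>2 / (2 * s\<^sup>2))"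
    by (simp only: exp_add[symmetric])
  then show ?thesis
    unfolding normal_density_def mult.assoc by (simp only: mult.left_commute[of "exp (c\<^sup>2 / s\<^sup>2)"])
qed

lemma nn_integral_Ln_square:
  assumes n: "0 < n" and B: "B \<in> sets borel"
  shows "(\<integral>\<^sup>+ x. (Ln mu n x)\<^sup>2 * indicator {x \<in> space (Qn mu n). Mn n x \<in> B} x \<partial>Qn mu n)
    = ennreal (exp (real n * mu\<^sup>2)) * emeasure (mean_law (- mu) n) B"
proof -
  define s where "s = 1 / sqrt (real n)"
  have s: "0 < s" "s\<^sup>2 = 1 / real n" using mean_law_variance[OF n] by (simp_all add: s_def)
  define h where "h m = ennreal (exp (- (2 * mu * m - mu\<^sup>2) / s\<^sup>2)) * indicator B m" for m
  have [measurable]: "h \<in> borel_measurable borel" unfolding h_def using B by measurable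
  have "2 * (- real n * W_of_M mu m) = - (2 * mu * m - mu\<^sup>2) / s\<^sup>2" for m
    by (simp add: s(2) W_of_M_def algebra_simps)
  moreover have "(ennreal (exp x))\<^sup>2 = ennreal (exp (2 * x))" for x :: real
    by (simp add: ennreal_power exp_double)
  ultimately have sq: "(ennreal (exp (- real n * W_of_M mu m)))\<^sup>2
      = ennreal (exp (- (2 * mu * m - mu\<^sup>2) / s\<^sup>2))" for m
    by (simp only:)
  have "(\<integral>\<^sup>+ x. (Ln mu n x)\<^sup>2 * indicator {x \<in> space (Qn mu n). Mn n x \<in> B} x \<partial>Qn mu n)
      = (\<integral>\<^sup>+ x. h (Mn n x) \<partial>Qn mu n)"
  proof (rule nn_integral_cong_AE)
    show "AE x in Qn mu n. (Ln mu n x)\<^sup>2 * indicator {x \<in> space (Qn mu n). Mn n x \<in> B} x = h (Mn n x)"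
      using AE_space Ln_AE_eq[OF n, of mu]
    proof eventually_elim
      case (elim x)
      then show ?case by (simp only: elim(2) sq) (simp add: h_def indicator_def)
    qed
  qed
  also have "\<dots> = (\<integral>\<^sup>+ m. h m \<partial>mean_law mu n)"
    unfolding distr_Mn[OF n, symmetric] by (rule nn_integral_distr[symmetric]) simp_all
  also have "\<dots> = (\<integral>\<^sup>+ m. ennreal (normal_density mu s m) * h m \<partial>lborel)"
    unfolding normal_measure_def s_def by (rule nn_integral_density) auto
  also have "\<dots> = (\<integral>\<^sup>+ m. ennreal (exp (real n * mu\<^sup>2)) * (ennreal (normal_density (- mu) s m) * indicator B m) \<partial>lborel)"
  proof (rule nn_integral_cong)
    fix m
    have "normal_density mu s m * exp (- (2 * mu * m - mu\<^sup>2) / s\<^sup>2)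
        = exp (real n * mu\<^sup>2) * normal_density (- mu) s m"
      using normal_density_exp_tilt[OF s(1), of mu m] by (simp add: s(2))
    then have tilt: "ennreal (normal_density mu s m) * ennreal (exp (- (2 * mu * m - mu\<^sup>2) / s\<^sup>2))
        = ennreal (exp (real n * mu\<^sup>2)) * ennreal (normal_density (- mu) s m)"
      by (simp add: ennreal_mult'[symmetric])
    show "ennreal (normal_density mu s m) * h m
        = ennreal (exp (real n * mu\<^sup>2)) * (ennreal (normal_density (- mu) s m) * indicator B m)"
      by (simp only: h_def mult.assoc[symmetric] tilt)
  qed
  also have "\<dots> = ennreal (exp (real n * mu\<^sup>2)) * emeasure (mean_law (- mu) n) B"
    using B by (subst nn_integral_cmult) (auto simp: normal_measure_def s_def emeasure_density)
  finally show ?thesis .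
qed

lemma asympt_efficient_iff:
  assumes B: "B \<in> sets borel" "B \<noteq> {}"
    and I: "\<And>a. a \<in> B \<Longrightarrow> \<exists>e>0. {a..a+e} \<subseteq> B \<or> {a-e..a} \<subseteq> B"
  shows "asympt_efficient mu B \<longleftrightarrow> (INF x\<in>B. (x + mu)\<^sup>2 / 2) - mu\<^sup>2 = 2 * (INF x\<in>B. x\<^sup>2 / 2)"
proof -
  let ?a = "\<lambda>n. - ln (enn2real (\<integral>\<^sup>+ x. (Ln mu n x)\<^sup>2 * indicator {x \<in> space (Qn mu n). Mn n x \<in> B} x
    \<partial>(Qn mu n))) / real n"
  let ?p = "\<lambda>n. - ln (measure (Qn 0 n) {x \<in> space (Qn 0 n). Mn n x \<in> B}) / real n"
  obtain a e where "0 < e" "{a..a+e} \<subseteq> B \<or> {a-e..a} \<subseteq> B" using B(2) I by blast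
  note pos = ln_measure_mean_law_ge(1)[OF _ this(1) B(1) this(2)]
  have "\<forall>\<^sub>F n in sequentially. - ln (measure (mean_law (- mu) n) B) / real n - mu\<^sup>2 = ?a n"
    using eventually_gt_at_top[of 0]
  proof eventually_elim
    case (elim n)
    interpret prob_space "mean_law (- mu) n"
      by (rule prob_space_normal_measure[OF mean_law_variance(1)[OF elim]])
    have "enn2real (\<integral>\<^sup>+ x. (Ln mu n x)\<^sup>2 * indicator {x \<in> space (Qn mu n). Mn n x \<in> B} x \<partial>(Qn mu n))
        = exp (real n * mu\<^sup>2) * measure (mean_law (- mu) n) B"
      by (simp add: nn_integral_Ln_square[OF elim B(1)] emeasure_eq_measure enn2real_mult)
    then show ?case
      using pos[OF elim, of "- mu"] elim by (simp add: ln_mult field_simps)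
  qed
  moreover have "(\<lambda>n. - ln (measure (mean_law (- mu) n) B) / real n - mu\<^sup>2)
      \<longlonglongrightarrow> (INF x\<in>B. (x + mu)\<^sup>2 / 2) - mu\<^sup>2"
    using tendsto_ln_measure_mean_law[OF B I, of "- mu"] by (intro tendsto_diff) simp_all
  ultimately have a: "?a \<longlonglongrightarrow> (INF x\<in>B. (x + mu)\<^sup>2 / 2) - mu\<^sup>2"
    by (rule Lim_transform_eventually[rotated])
  have "\<forall>\<^sub>F n in sequentially. - ln (measure (mean_law 0 n) B) / real n = ?p n"
    using eventually_gt_at_top[of 0] by eventually_elim (simp add: measure_Mn B(1))
  moreover have "(\<lambda>n. - ln (measure (mean_law 0 n) B) / real n) \<longlonglongrightarrow> (INF x\<in>B. x\<^sup>2 / 2)"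
    using tendsto_ln_measure_mean_law[OF B I, of 0] by simp
  ultimately have p: "?p \<longlonglongrightarrow> (INF x\<in>B. x\<^sup>2 / 2)"
    by (rule Lim_transform_eventually[rotated])
  show ?thesis
    unfolding asympt_efficient_def using a p
    by (auto dest: tendsto_unique[OF trivial_limit_sequentially] intro!: exI[of _ "2 * (INF x\<in>B. x\<^sup>2 / 2)"])
qed

definition rare_set :: "real \<Rightarrow> real set" where
  "rare_set b = {..-b} \<union> {1..}"

lemma closed_rare_set: "closed (rare_set b)"
  unfolding rare_set_def by (intro closed_Un closed_atMost closed_atLeast)

lemma rare_set_interval: "a \<in> rare_set b \<Longrightarrow> \<exists>e>0. {a..a+e} \<subseteq> rare_set b \<or> {a-e..a} \<subseteq> rare_set b"
  by (rule exI[of _ 1]) (auto simp: rare_set_def)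

lemma INF_rare_set_square:
  assumes "1 \<le> b"
  shows "(INF x\<in>rare_set b. x\<^sup>2 / 2) = 1 / 2"
proof (rule cInf_eq_minimum)
  show "1 / 2 \<in> (\<lambda>x. x\<^sup>2 / 2) ` rare_set b"
    by (rule image_eqI[of _ _ 1]) (auto simp: rare_set_def)
  fix y assume "y \<in> (\<lambda>x. x\<^sup>2 / 2) ` rare_set b"
  then obtain x where "y = x\<^sup>2 / 2" "1 \<le> \<bar>x\<bar>"
    using assms by (auto simp: rare_set_def)
  then show "1 / 2 \<le> y"
    using one_le_power[of "\<bar>x\<bar>" 2] by simp
qed

lemma rare_set_rate_iff:
  assumes "1 < b"
  shows "(INF x\<in>rare_set b. (x + mu)\<^sup>2 / 2) - mu\<^sup>2 = 1 \<longleftrightarrow> mu = 1 \<and> 3 \<le> b"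
proof
  let ?R = "INF x\<in>rare_set b. (x + mu)\<^sup>2 / 2"
  have bdd: "bdd_below ((\<lambda>x. (x + mu)\<^sup>2 / 2) ` rare_set b)"
    by (rule bdd_belowI[of _ 0]) auto
  assume R: "?R - mu\<^sup>2 = 1"
  have "?R \<le> (1 + mu)\<^sup>2 / 2"
    by (rule cINF_lower[OF bdd]) (simp add: rare_set_def)
  with R have "(mu - 1)\<^sup>2 \<le> 0" by (simp add: power2_eq_square algebra_simps)
  then have mu: "mu = 1" by simp
  have "?R \<le> (- b + mu)\<^sup>2 / 2"
    by (rule cINF_lower[OF bdd]) (simp add: rare_set_def)
  with R mu have "2 * 2 \<le> (b - 1) * (b - 1)" by (simp add: power2_eq_square algebra_simps)
  with assms have "2 \<le> b - 1"
    by (metis abs_le_square_iff abs_of_nonneg diff_gt_0_iff_gt less_imp_le power2_eq_square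
        zero_le_numeral)
  with mu show "mu = 1 \<and> 3 \<le> b" by simp
next
  assume "mu = 1 \<and> 3 \<le> b"
  then have mu: "mu = 1" and b: "3 \<le> b" by auto
  have "(INF x\<in>rare_set b. (x + 1)\<^sup>2 / 2) = 2"
  proof (rule cInf_eq_minimum)
    show "2 \<in> (\<lambda>x. (x + 1)\<^sup>2 / 2) ` rare_set b"
      by (rule image_eqI[of _ _ 1]) (auto simp: rare_set_def)
    fix y assume "y \<in> (\<lambda>x. (x + 1)\<^sup>2 / 2) ` rare_set b"
    then obtain x where "y = (x + 1)\<^sup>2 / 2" "2 \<le> \<bar>x + 1\<bar>"
      using b by (auto simp: rare_set_def)
    then show "2 \<le> y"
      by (metis abs_le_square_iff abs_of_nonneg le_divide_eq_numeral1(1) power2_eq_square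
          zero_le_numeral mult_2_right numeral_Bit0 one_add_one)
  qed
  with mu show "(INF x\<in>rare_set b. (x + mu)\<^sup>2 / 2) - mu\<^sup>2 = 1" by simp
qed

lemma I_QB_rare_set:
  "I_QB 1 (rare_set b) w
    = (if w \<ge> 1/2 \<or> w \<le> - b - 1/2 then ereal ((w - 1/2)\<^sup>2 / 2) else \<infinity>)"
  using closed_rare_set[of b] by (auto simp: I_QB_eq closure_closed rare_set_def)

lemma neg_two_mult_le_half_square_iff: "- 2 * t \<le> t\<^sup>2 / 2 \<longleftrightarrow> 0 \<le> t \<or> t \<le> - 4" for t :: real
proof -
  have "- 2 * t \<le> t\<^sup>2 / 2 \<longleftrightarrow> 0 \<le> t\<^sup>2 / 2 - (- 2 * t)"
    by (rule diff_ge_0_iff_ge[symmetric])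
  also have "t\<^sup>2 / 2 - (- 2 * t) = t * (t + 4) / 2"
    by (simp add: power2_eq_square algebra_simps)
  also have "0 \<le> t * (t + 4) / 2 \<longleftrightarrow> 0 \<le> t \<or> t \<le> - 4"
    by (auto simp: zero_le_mult_iff)
  finally show ?thesis .
qed

lemma subdiff_I_QB_rare_set_iff:
  assumes "1 < b"
  shows "- 2 \<in> subdiff (I_QB 1 (rare_set b)) (1/2) \<longleftrightarrow> 3 \<le> b"
proof -
  let ?f = "I_QB 1 (rare_set b)"
  have f0: "?f (1/2) = 0" by (simp add: I_QB_rare_set)
  have f: "?f y = ereal ((y - 1/2)\<^sup>2 / 2)" if "1/2 \<le> y \<or> y \<le> - b - 1/2" for y
    using that by (simp add: I_QB_rare_set)
  have key: "?f (1/2) + ereal (- 2 * (y - 1/2)) \<le> ?f y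
      \<longleftrightarrow> - 2 * (y - 1/2) \<le> (y - 1/2)\<^sup>2 / 2" if "1/2 \<le> y \<or> y \<le> - b - 1/2" for y
    by (simp only: f0 f[OF that] add.left_neutral ereal_less_eq(3))
  show ?thesis
  proof
    assume "- 2 \<in> subdiff ?f (1/2)"
    then have "?f (1/2) + ereal (- 2 * ((- b - 1/2) - 1/2)) \<le> ?f (- b - 1/2)"
      unfolding subdiff_def by blast
    then have "0 \<le> - b - 1/2 - 1/2 \<or> - b - 1/2 - 1/2 \<le> - 4"
      by (simp only: key neg_two_mult_le_half_square_iff order_refl disj_not1 simp_thms)
    with assms show "3 \<le> b" by linarith
  next
    assume "3 \<le> b"
    show "- 2 \<in> subdiff ?f (1/2)"
      unfolding subdiff_def
    proof (intro CollectI allI)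
      fix y
      show "?f (1/2) + ereal (- 2 * (y - 1/2)) \<le> ?f y"
      proof (cases "1/2 \<le> y \<or> y \<le> - b - 1/2")
        case True
        with \<open>3 \<le> b\<close> have "0 \<le> y - 1/2 \<or> y - 1/2 \<le> - 4" by linarith
        then show ?thesis
          by (simp only: key[OF True] neg_two_mult_le_half_square_iff)
      qed (simp add: I_QB_rare_set)
    qed
  qed
qed

lemma asympt_efficient_rare_set_iff:
  assumes "1 < b"
  shows "asympt_efficient mu (rare_set b) \<longleftrightarrow> mu = 1 \<and> 3 \<le> b"
proof -
  have "rare_set b \<in> sets borel" "rare_set b \<noteq> {}"
    using closed_rare_set[of b] by (auto simp: rare_set_def)
  with rare_set_interval show ?thesis
    using assms by (simp add: asympt_efficient_iff INF_rare_set_square rare_set_rate_iff)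
qed

theorem mainTheorem5:
  fixes b :: real
  assumes "b > 1"
  shows "(\<forall>w. I_QB 1 ({..-b} \<union> {1..}) w =
            (if w \<ge> 1/2 \<or> w \<le> - b - 1/2 then ereal ((w - 1/2)\<^sup>2 / 2) else \<infinity>))
       \<and> ((-2) \<in> subdiff (I_QB 1 ({..-b} \<union> {1..})) (1/2) \<longleftrightarrow> b \<ge> 3)
       \<and> (\<forall>mu::real. asympt_efficient mu ({..-b} \<union> {1..}) \<longleftrightarrow> mu = 1 \<and> b \<ge> 3)"
  using I_QB_rare_set[of b] subdiff_I_QB_rare_set_iff[OF assms] asympt_efficient_rare_set_iff[OF assms]
  unfolding rare_set_def by blast

end
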